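(* Let $m,n$ be integers of opposite parity, and let $M'_1=2m-n$, $N'_1=m+2n$, $v=(M'_1,N'_1)$, $w=(-N'_1,M'_1)$ and $c=(v+w)/2$. For $k=1,2,3,4$ let $G'_2(k)$ be the group of plane isometries generated by the translations in the lattice $L_k$ and the quarter turn about $c$, where $L_1=\mathbb{Z}v+\mathbb{Z}w$, $L_2=\mathbb{Z}(v+w)+\mathbb{Z}(v-w)$, $L_3=2L_1$, $L_4=2L_2$. Let $G_2$ be the isometry group of the $(5,3)$ satin with $M_1=2$, $N_1=1$, namely the group generated by the translations in the lattice $\mathbb{Z}(2,1)+\mathbb{Z}(-1,2)$ and the quarter turn about the origin. Then $G'_2(k)$ is a subgroup of $G_2$ for each $k=1,2,3,4$.
   Context: The groups are the isometry groups (type $p4$) attached to square lattice units: a level-1 lattice unit is the square with corners $0$, $v$, $v+w$, $w$ (quarter-turn centres at corners and centre, half-turn centres at mid-sides); the level-2 unit is the square with the same centre escribing it (side vectors $v+w$, $v-w$); levels 3 and 4 are the level-1 and level-2 units doubled in size about the same centre. The level-1 unit of the $(5,3)$ satin's isometry group is the square on side vectors $(2,1)$ and $(-1,2)$ with a corner at the origin, and the larger lattice unit based on $(M'_1,N'_1)$ is placed with its first corner at the origin, a corner of the satin's lattice units. *)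

theory Defs
  imports Complex_Main "HOL-Algebra.Bij" "HOL-Algebra.Generated_Groups"
begin

text \<open>The Euclidean plane is identified with the complex numbers: (x,y) = x + i y.\<close>

definition transl :: "complex \<Rightarrow> complex \<Rightarrow> complex" where
  "transl t = (\<lambda>z. z + t)"

definition qturn :: "complex \<Rightarrow> complex \<Rightarrow> complex" where
  "qturn c = (\<lambda>z. c + \<i> * (z - c))"

definition lattice :: "complex \<Rightarrow> complex \<Rightarrow> complex set" where
  "lattice a b = {of_int p * a + of_int q * b | p q. True}"

abbreviation PlaneBij :: "(complex \<Rightarrow> complex) monoid" where
  "PlaneBij \<equiv> BijGroup (UNIV :: complex set)"

definition iso_group :: "complex set \<Rightarrow> complex \<Rightarrow> (complex \<Rightarrow> complex) set" where
  "iso_group L c = generate PlaneBij (transl ` L \<union> {qturn c})"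

end

theory Submission
  imports Defs
begin

text \<open>Every generator of \<open>G'\<^sub>2(k)\<close> already lies in \<open>G\<^sub>2\<close>: the vectors \<open>v\<close> and \<open>w = \<i> v\<close> are
  integer combinations of \<open>(2,1)\<close> and \<open>(-1,2)\<close>, so all four lattices lie in the satin lattice,
  and the quarter turn about \<open>c\<close> is the quarter turn about the origin followed by the
  translation by \<open>(1 - \<i>) c = v\<close>.\<close>

interpretation PlaneBij: group PlaneBij
  by (rule group_BijGroup)

lemma transl_in_PlaneBij: "transl t \<in> carrier PlaneBij"
proof -
  have "bij (transl t)"
    by (rule bij_betw_byWitness[where f'="transl (-t)"]) (auto simp: transl_def)
  thus ?thesis by (simp add: BijGroup_def Bij_def)
qed

lemma qturn_in_PlaneBij: "qturn c \<in> carrier PlaneBij"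
proof -
  have "bij (qturn c)"
    by (rule bij_betw_byWitness[where f'="\<lambda>z. c - \<i> * (z - c)"])
       (auto simp: qturn_def algebra_simps)
  thus ?thesis by (simp add: BijGroup_def Bij_def)
qed

lemma PlaneBij_mult_eq_comp:
  assumes "f \<in> carrier PlaneBij" "g \<in> carrier PlaneBij"
  shows "f \<otimes>\<^bsub>PlaneBij\<^esub> g = f \<circ> g"
  using assms by (simp add: BijGroup_def compose_def restrict_def comp_def)

lemma qturn_eq_transl_comp_qturn: "qturn c = transl ((1 - \<i>) * (c - c')) \<circ> qturn c'"
  by (rule ext) (simp add: qturn_def transl_def algebra_simps)

lemma lattice_memI: "z = of_int p * a + of_int q * b \<Longrightarrow> z \<in> lattice a b"
  unfolding lattice_def by blast

lemma lattice_basis_mem: "a \<in> lattice a b" "b \<in> lattice a b"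
  by (rule lattice_memI[where p=1 and q=0], simp) (rule lattice_memI[where p=0 and q=1], simp)

lemma lattice_add:
  assumes "x \<in> lattice a b" "y \<in> lattice a b"
  shows "x + y \<in> lattice a b"
proof -
  obtain p q p' q' where "x = of_int p * a + of_int q * b" "y = of_int p' * a + of_int q' * b"
    using assms unfolding lattice_def by blast
  hence "x + y = of_int (p + p') * a + of_int (q + q') * b"
    by (simp add: algebra_simps)
  thus ?thesis by (rule lattice_memI)
qed

lemma lattice_diff:
  assumes "x \<in> lattice a b" "y \<in> lattice a b"
  shows "x - y \<in> lattice a b"
proof -
  obtain p q p' q' where "x = of_int p * a + of_int q * b" "y = of_int p' * a + of_int q' * b"
    using assms unfolding lattice_def by blast
  hence "x - y = of_int (p - p') * a + of_int (q - q') * b"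
    by (simp add: algebra_simps)
  thus ?thesis by (rule lattice_memI)
qed

lemma lattice_double:
  assumes "x \<in> lattice a b"
  shows "2 * x \<in> lattice a b"
  using lattice_add[OF assms assms] by (simp only: mult_2)

lemma lattice_subset_lattice:
  assumes "a \<in> lattice e f" "b \<in> lattice e f"
  shows "lattice a b \<subseteq> lattice e f"
proof
  fix z assume "z \<in> lattice a b"
  then obtain p q where z: "z = of_int p * a + of_int q * b"
    unfolding lattice_def by blast
  obtain pa qa where a: "a = of_int pa * e + of_int qa * f"
    using assms(1) unfolding lattice_def by blast
  obtain pb qb where b: "b = of_int pb * e + of_int qb * f"
    using assms(2) unfolding lattice_def by blast
  have "z = of_int (p * pa + q * pb) * e + of_int (p * qa + q * qb) * f"
    unfolding z a b by (simp add: algebra_simps)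
  thus "z \<in> lattice e f" by (rule lattice_memI)
qed

lemma iso_group_subgroup: "subgroup (iso_group L c) PlaneBij"
  unfolding iso_group_def
  by (rule PlaneBij.generate_is_subgroup) (use transl_in_PlaneBij qturn_in_PlaneBij in blast)

lemma transl_in_iso_group: "t \<in> L \<Longrightarrow> transl t \<in> iso_group L c"
  unfolding iso_group_def by (rule generate.incl) blast

lemma qturn_in_iso_group:
  assumes "(1 - \<i>) * (c - c') \<in> L"
  shows "qturn c \<in> iso_group L c'"
proof -
  have "qturn c' \<in> iso_group L c'"
    unfolding iso_group_def by (rule generate.incl) blast
  with assms have "transl ((1 - \<i>) * (c - c')) \<otimes>\<^bsub>PlaneBij\<^esub> qturn c' \<in> iso_group L c'"
    by (intro subgroup.m_closed[OF iso_group_subgroup] transl_in_iso_group)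
  thus ?thesis
    by (simp add: PlaneBij_mult_eq_comp transl_in_PlaneBij qturn_in_PlaneBij
                  flip: qturn_eq_transl_comp_qturn)
qed

lemma iso_group_subgroup_iso_group:
  assumes "L \<subseteq> L'" "(1 - \<i>) * (c - c') \<in> L'"
  shows "subgroup (iso_group L c) (PlaneBij\<lparr>carrier := iso_group L' c'\<rparr>)"
proof -
  have "transl ` L \<union> {qturn c} \<subseteq> iso_group L' c'"
    using assms by (auto intro: transl_in_iso_group qturn_in_iso_group)
  hence "iso_group L c \<subseteq> iso_group L' c'"
    unfolding iso_group_def[of L]
    by (rule PlaneBij.generate_subgroup_incl[OF _ iso_group_subgroup])
  thus ?thesis
    by (rule PlaneBij.subgroup_incl[OF iso_group_subgroup iso_group_subgroup])
qed

theorem theorem3: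
  fixes m n :: int
  assumes "odd (m + n)"
  defines "v \<equiv> Complex (of_int (2*m - n)) (of_int (m + 2*n))"
      and "w \<equiv> Complex (- of_int (m + 2*n)) (of_int (2*m - n))"
  defines "c \<equiv> (v + w) / 2"
  defines "L \<equiv> (\<lambda>k::nat. if k = 1 then lattice v w
                       else if k = 2 then lattice (v + w) (v - w)
                       else if k = 3 then lattice (2*v) (2*w)
                       else lattice (2*(v + w)) (2*(v - w)))"
  defines "G2 \<equiv> iso_group (lattice (Complex 2 1) (Complex (-1) 2)) 0"
  shows "\<forall>k\<in>{1,2,3,4::nat}. subgroup (iso_group (L k) c) (PlaneBij\<lparr>carrier := G2\<rparr>)"
proof -
  define \<Lambda> where "\<Lambda> = lattice (Complex 2 1) (Complex (-1) 2)"
  have v_in: "v \<in> \<Lambda>" and w_in: "w \<in> \<Lambda>"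
    unfolding \<Lambda>_def
    by (rule lattice_memI[where p=m and q=n], simp add: v_def complex_eq_iff)
       (rule lattice_memI[where p="-n" and q=m], simp add: w_def complex_eq_iff)
  have lattice_vw: "lattice v w \<subseteq> \<Lambda>"
    using v_in w_in unfolding \<Lambda>_def by (rule lattice_subset_lattice)
  have basis: "v \<in> lattice v w" "w \<in> lattice v w"
    by (rule lattice_basis_mem)+
  have sum_diff: "v + w \<in> lattice v w" "v - w \<in> lattice v w"
    using basis by (rule lattice_add, rule lattice_diff)
  have "(1 - \<i>) * (c - 0) = v"
    by (simp add: c_def v_def w_def complex_eq_iff)
  with v_in have centre_shift: "(1 - \<i>) * (c - 0) \<in> \<Lambda>"
    by simp
  have "L k \<subseteq> lattice v w" for k
    unfolding L_def
    using lattice_subset_lattice[OF basis] lattice_subset_lattice[OF sum_diff]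
      lattice_subset_lattice[OF basis[THEN lattice_double]]
      lattice_subset_lattice[OF sum_diff[THEN lattice_double]]
    by simp
  with lattice_vw have "L k \<subseteq> \<Lambda>" for k
    by blast
  with centre_shift have "subgroup (iso_group (L k) c) (PlaneBij\<lparr>carrier := G2\<rparr>)" for k
    unfolding G2_def \<Lambda>_def[symmetric] by (intro iso_group_subgroup_iso_group)
  thus ?thesis by blast
qed

end
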